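(* For every $n\ge1$, the $\{\mathbf{3},\mathbf{2}+\mathbf{2}\}$-free naturally labelled posets on $[n]$ are in bijection with the labelled binary words of length $n$ satisfying all of the following: (1) the first letter is $\mathsf0$; (2) whenever two consecutive letters are both $\mathsf0$, their labels are decreasing; (3) whenever two consecutive letters are both $\mathsf1$, their labels are increasing; (4) the label of every $\mathsf1$ is greater than the labels of all $\mathsf0$s occurring earlier in the word.
   Context: A partial order $\preceq$ on $[n]$ is naturally labelled if $x\prec y$ implies $x<y$. It is $\mathbf{3}$-free if there are no $x\prec y\prec z$. It is $(\mathbf{2}+\mathbf{2})$-free if it has no induced subposet consisting of two disjoint $2$-element chains, i.e. no distinct $i\prec j$, $k\prec\ell$ with each of $i,j$ incomparable to each of $k,\ell$. A labelled binary word of length $n$ is a word $w_1\cdots w_n$ over $\{\mathsf0,\mathsf1\}$ together with a bijective assignment of labels from $[n]$ to its positions. *)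

theory Defs
  imports Main
begin

text \<open>A partial order on [n] = {1..n}, given as its (reflexive) order relation
  \<open>P \<subseteq> {1..n} \<times> {1..n}\<close>; \<open>(x,y) \<in> P\<close> means x \<preceq> y.\<close>
definition partial_order_on_n :: "nat \<Rightarrow> (nat \<times> nat) set \<Rightarrow> bool" where
  "partial_order_on_n n P \<longleftrightarrow>
     P \<subseteq> {1..n} \<times> {1..n} \<and>
     (\<forall>x\<in>{1..n}. (x, x) \<in> P) \<and>
     (\<forall>x y. (x, y) \<in> P \<and> (y, x) \<in> P \<longrightarrow> x = y) \<and>
     (\<forall>x y z. (x, y) \<in> P \<and> (y, z) \<in> P \<longrightarrow> (x, z) \<in> P)"

definition strict :: "(nat \<times> nat) set \<Rightarrow> nat \<Rightarrow> nat \<Rightarrow> bool" where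
  "strict P x y \<longleftrightarrow> (x, y) \<in> P \<and> x \<noteq> y"

definition incomparable :: "(nat \<times> nat) set \<Rightarrow> nat \<Rightarrow> nat \<Rightarrow> bool" where
  "incomparable P x y \<longleftrightarrow> (x, y) \<notin> P \<and> (y, x) \<notin> P"

definition naturally_labelled :: "(nat \<times> nat) set \<Rightarrow> bool" where
  "naturally_labelled P \<longleftrightarrow> (\<forall>x y. strict P x y \<longrightarrow> x < y)"

definition three_free :: "(nat \<times> nat) set \<Rightarrow> bool" where
  "three_free P \<longleftrightarrow> \<not> (\<exists>x y z. strict P x y \<and> strict P y z)"

definition two_two_free :: "(nat \<times> nat) set \<Rightarrow> bool" where
  "two_two_free P \<longleftrightarrow> \<not> (\<exists>i j k l. distinct [i, j, k, l] \<and> strict P i j \<and> strict P k l \<and>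
      incomparable P i k \<and> incomparable P i l \<and> incomparable P j k \<and> incomparable P j l)"

definition free_posets :: "nat \<Rightarrow> (nat \<times> nat) set set" where
  "free_posets n = {P. partial_order_on_n n P \<and> naturally_labelled P \<and> three_free P \<and> two_two_free P}"

datatype letter = L0 | L1

definition labelled_word :: "nat \<Rightarrow> (letter \<times> nat) list \<Rightarrow> bool" where
  "labelled_word n w \<longleftrightarrow> length w = n \<and> distinct (map snd w) \<and> set (map snd w) = {1..n}"

definition good_word :: "nat \<Rightarrow> (letter \<times> nat) list \<Rightarrow> bool" where
  "good_word n w \<longleftrightarrow> labelled_word n w \<and>
     fst (w ! 0) = L0 \<and>
     (\<forall>i. i + 1 < length w \<and> fst (w ! i) = L0 \<and> fst (w ! (i+1)) = L0 \<longrightarrow> snd (w ! i) > snd (w ! (i+1))) \<and>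
     (\<forall>i. i + 1 < length w \<and> fst (w ! i) = L1 \<and> fst (w ! (i+1)) = L1 \<longrightarrow> snd (w ! i) < snd (w ! (i+1))) \<and>
     (\<forall>i j. i < j \<and> j < length w \<and> fst (w ! i) = L0 \<and> fst (w ! j) = L1 \<longrightarrow> snd (w ! i) < snd (w ! j))"

definition good_words :: "nat \<Rightarrow> (letter \<times> nat) list set" where
  "good_words n = {w. good_word n w}"

end

theory Submission
  imports Defs
begin

text \<open>
  In a 3-free poset every element either has nothing strictly below it (a bottom, letter 0)
  or has something strictly below it (a top, letter 1), and \<open>x \<prec> y\<close> forces \<open>x\<close> to be a
  bottom and \<open>y\<close> a top. Being (2+2)-free says precisely that the strict up-sets of the bottoms, and the strict
  down-sets of the tops, are totally ordered by inclusion. Hence the following is a linear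
  order: a bottom precedes a top iff it lies below it, bottoms with larger up-sets come first,
  tops with smaller down-sets come first, and ties are broken by the labels (decreasing for
  bottoms, increasing for tops). Listing the elements in this order, each with its letter,
  gives the word. Conversely a word determines the poset in which each 0 lies below every later 1,
  and the conditions on a good word say exactly that its labels appear in the above order.
\<close>

lemma psubset_lex_trans:
  fixes a b c :: "'b::order"
  assumes "A \<subset> B \<or> (A = B \<and> a < b)" "B \<subset> C \<or> (B = C \<and> b < c)"
  shows "A \<subset> C \<or> (A = C \<and> a < c)"
  using assms by (metis order.strict_trans psubset_trans)

lemma psubset_lex_total:
  fixes a b :: "'b::linorder"
  assumes "A \<subseteq> B \<or> B \<subseteq> A" "a \<noteq> b"
  shows "(A \<subset> B \<or> (A = B \<and> a < b)) \<or> (B \<subset> A \<or> (B = A \<and> b < a))"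
  using assms by (metis linorder_neqE psubset_eq)

lemma transp_consecutive:
  assumes "transp Q" "i < j" "\<And>k. i \<le> k \<Longrightarrow> k < j \<Longrightarrow> Q (f k) (f (Suc k))"
  shows "Q (f i) (f j)"
  using assms(2,3)
proof (induction j)
  case (Suc j)
  have "Q (f j) (f (Suc j))"
    using Suc.prems by simp
  moreover have "i = j \<or> Q (f i) (f j)"
    using Suc.IH Suc.prems less_Suc_eq by auto
  ultimately show ?case
    using assms(1) by (metis transpD)
qed simp

lemma sorted_wrt_nth_iff_less:
  assumes "sorted_wrt Q xs" "\<And>a b. Q a b \<Longrightarrow> \<not> Q b a" "i < length xs" "j < length xs"
  shows "Q (xs!i) (xs!j) \<longleftrightarrow> i < j"
  using assms sorted_wrt_nth_less by (metis linorder_neqE_nat)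

definition word_poset :: "(letter \<times> nat) list \<Rightarrow> (nat \<times> nat) set" where
  "word_poset w = {(snd (w!i), snd (w!j)) | i j. i < length w \<and> j < length w \<and>
     (i = j \<or> (i < j \<and> fst (w!i) = L0 \<and> fst (w!j) = L1))}"

lemma label_eq_iff_index_eq:
  assumes "distinct (map snd w)" "i < length w" "j < length w"
  shows "snd (w!i) = snd (w!j) \<longleftrightarrow> i = j"
  using nth_eq_iff_index_eq[of "map snd w" i j] assms by simp

lemma strict_word_poset_iff:
  assumes "distinct (map snd w)"
  shows "strict (word_poset w) x y \<longleftrightarrow>
    (\<exists>i j. i < j \<and> j < length w \<and> w!i = (L0, x) \<and> w!j = (L1, y))"
proof
  assume "strict (word_poset w) x y"
  then obtain i j where "x = snd (w!i)" "y = snd (w!j)" "i < length w" "j < length w"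
    "i = j \<or> (i < j \<and> fst (w!i) = L0 \<and> fst (w!j) = L1)" "x \<noteq> y"
    unfolding strict_def word_poset_def by blast
  then show "\<exists>i j. i < j \<and> j < length w \<and> w!i = (L0, x) \<and> w!j = (L1, y)"
    by (metis prod.collapse)
next
  assume "\<exists>i j. i < j \<and> j < length w \<and> w!i = (L0, x) \<and> w!j = (L1, y)"
  then obtain i j where ij: "i < j" "j < length w" "w!i = (L0, x)" "w!j = (L1, y)"
    by blast
  then have "x \<noteq> y"
    using label_eq_iff_index_eq[OF assms, of i j] by auto
  moreover have "(x, y) \<in> word_poset w"
    unfolding word_poset_def using ij by (intro CollectI exI[of _ i] exI[of _ j]) auto
  ultimately show "strict (word_poset w) x y"
    unfolding strict_def by simp
qed

lemma strict_word_poset_nth_iff: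
  assumes "distinct (map snd w)" "i < length w" "j < length w"
  shows "strict (word_poset w) (snd (w!i)) (snd (w!j)) \<longleftrightarrow>
    i < j \<and> fst (w!i) = L0 \<and> fst (w!j) = L1"
proof
  assume "strict (word_poset w) (snd (w!i)) (snd (w!j))"
  then obtain k l where kl: "k < l" "l < length w" "w!k = (L0, snd (w!i))" "w!l = (L1, snd (w!j))"
    unfolding strict_word_poset_iff[OF assms(1)] by blast
  moreover have "k = i"
    using kl label_eq_iff_index_eq[OF assms(1), of k i] assms(2) by simp
  moreover have "l = j"
    using kl label_eq_iff_index_eq[OF assms(1), of l j] assms(3) by simp
  ultimately show "i < j \<and> fst (w!i) = L0 \<and> fst (w!j) = L1"
    by (metis fst_conv)
next
  assume "i < j \<and> fst (w!i) = L0 \<and> fst (w!j) = L1"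
  then show "strict (word_poset w) (snd (w!i)) (snd (w!j))"
    unfolding strict_word_poset_iff[OF assms(1)] using assms(3)
    by (intro exI[of _ i] exI[of _ j]) (auto simp: prod_eq_iff)
qed

lemma mem_word_poset_iff:
  "(x, y) \<in> word_poset w \<longleftrightarrow> (x = y \<and> x \<in> set (map snd w)) \<or> strict (word_poset w) x y"
proof -
  have "(x, x) \<in> word_poset w \<longleftrightarrow> x \<in> set (map snd w)"
    unfolding word_poset_def by (force simp: in_set_conv_nth)
  then show ?thesis
    unfolding strict_def by auto
qed

lemma word_poset_no_chain:
  assumes "distinct (map snd w)" "strict (word_poset w) x y" "strict (word_poset w) y z"
  shows False
proof -
  obtain j k where "j < length w" "w!j = (L1, y)" "k < length w" "w!k = (L0, y)"
    using assms(2,3) unfolding strict_word_poset_iff[OF assms(1)] by (meson order.strict_trans)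
  then show False
    using label_eq_iff_index_eq[OF assms(1), of j k] by auto
qed

lemma two_two_free_word_poset:
  assumes "distinct (map snd w)"
  shows "two_two_free (word_poset w)"
  unfolding two_two_free_def
proof (intro notI, elim exE conjE)
  let ?P = "word_poset w"
  fix x y u v
  assume "distinct [x, y, u, v]" "strict ?P x y" "strict ?P u v"
    "incomparable ?P x v" "incomparable ?P y u"
  from \<open>strict ?P x y\<close> obtain i j where
    xy: "i < j" "j < length w" "w!i = (L0, x)" "w!j = (L1, y)"
    unfolding strict_word_poset_iff[OF assms] by blast
  from \<open>strict ?P u v\<close> obtain k l where
    uv: "k < l" "l < length w" "w!k = (L0, u)" "w!l = (L1, v)"
    unfolding strict_word_poset_iff[OF assms] by blast
  text \<open>Whichever of the two 0s comes first lies below the 1 of the other chain.\<close>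
  have "\<not> i < k"
  proof
    assume "i < k"
    then have "strict ?P x v"
      unfolding strict_word_poset_iff[OF assms] using xy uv by (intro exI[of _ i] exI[of _ l]) auto
    then show False
      using \<open>incomparable ?P x v\<close> unfolding incomparable_def strict_def by blast
  qed
  moreover have "\<not> k < i"
  proof
    assume "k < i"
    then have "strict ?P u y"
      unfolding strict_word_poset_iff[OF assms] using xy uv by (intro exI[of _ k] exI[of _ j]) auto
    then show False
      using \<open>incomparable ?P y u\<close> unfolding incomparable_def strict_def by blast
  qed
  moreover have "i \<noteq> k"
    using \<open>distinct [x, y, u, v]\<close> xy uv by auto
  ultimately show False
    by simp
qed

lemma word_poset_in_free_posets:
  assumes "good_word n w"
  shows "word_poset w \<in> free_posets n"
proof -
  have distinct: "distinct (map snd w)" and labels: "set (map snd w) = {1..n}"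
    and increasing: "\<And>i j. i < j \<Longrightarrow> j < length w \<Longrightarrow> fst (w!i) = L0 \<Longrightarrow> fst (w!j) = L1
      \<Longrightarrow> snd (w!i) < snd (w!j)"
    using assms unfolding good_word_def labelled_word_def by auto
  let ?P = "word_poset w"
  have "?P \<subseteq> {1..n} \<times> {1..n}"
    using labels unfolding word_poset_def by (auto simp flip: labels)
  moreover have "(x, x) \<in> ?P" if "x \<in> {1..n}" for x
    using that labels mem_word_poset_iff by blast
  moreover have "x = y" if "(x, y) \<in> ?P" "(y, x) \<in> ?P" for x y
    using that word_poset_no_chain[OF distinct] unfolding strict_def by blast
  moreover have "(x, z) \<in> ?P" if "(x, y) \<in> ?P" "(y, z) \<in> ?P" for x y z
    using that word_poset_no_chain[OF distinct] unfolding strict_def by blast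
  ultimately have "partial_order_on_n n ?P"
    unfolding partial_order_on_n_def by blast
  moreover have "naturally_labelled ?P"
    unfolding naturally_labelled_def strict_word_poset_iff[OF distinct]
    using increasing by fastforce
  moreover have "three_free ?P"
    unfolding three_free_def using word_poset_no_chain[OF distinct] by blast
  ultimately show ?thesis
    unfolding free_posets_def using two_two_free_word_poset[OF distinct] by blast
qed

definition is_top :: "(nat \<times> nat) set \<Rightarrow> nat \<Rightarrow> bool" where
  "is_top P y \<longleftrightarrow> (\<exists>x. strict P x y)"

definition upper_set :: "(nat \<times> nat) set \<Rightarrow> nat \<Rightarrow> nat set" where
  "upper_set P x = {y. strict P x y}"

definition lower_set :: "(nat \<times> nat) set \<Rightarrow> nat \<Rightarrow> nat set" where
  "lower_set P y = {x. strict P x y}"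

definition word_order :: "(nat \<times> nat) set \<Rightarrow> nat \<Rightarrow> nat \<Rightarrow> bool" where
  "word_order P a b \<longleftrightarrow>
     (if is_top P a then
        (if is_top P b then lower_set P a \<subset> lower_set P b \<or> (lower_set P a = lower_set P b \<and> a < b)
         else \<not> strict P b a)
      else
        (if is_top P b then strict P a b
         else upper_set P b \<subset> upper_set P a \<or> (upper_set P a = upper_set P b \<and> b < a)))"

lemma strict_imp_not_top:
  assumes "three_free P" "strict P x y"
  shows "\<not> is_top P x"
  using assms unfolding three_free_def is_top_def by blast

lemma strict_imp_top: "strict P x y \<Longrightarrow> is_top P y"
  unfolding is_top_def by blast

lemma upper_sets_nested:
  assumes "three_free P" "two_two_free P" "\<not> is_top P a" "\<not> is_top P b"
  shows "upper_set P a \<subseteq> upper_set P b \<or> upper_set P b \<subseteq> upper_set P a"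
proof (rule ccontr)
  assume "\<not> ?thesis"
  then obtain t t' where t: "strict P a t" "\<not> strict P b t" and t': "strict P b t'" "\<not> strict P a t'"
    unfolding upper_set_def by auto
  have tops: "is_top P t" "is_top P t'"
    using t t' strict_imp_top by blast+
  have "distinct [a, t, b, t']"
    using t t' tops assms(3,4) by auto
  moreover have "incomparable P a b" "incomparable P a t'" "incomparable P t b" "incomparable P t t'"
    unfolding incomparable_def
    using t t' tops assms(3,4) strict_imp_not_top[OF assms(1)] strict_imp_top
    unfolding strict_def by blast+
  ultimately show False
    using assms(2) t(1) t'(1) unfolding two_two_free_def by blast
qed

lemma lower_sets_nested:
  assumes "three_free P" "two_two_free P" "is_top P a" "is_top P b"
  shows "lower_set P a \<subseteq> lower_set P b \<or> lower_set P b \<subseteq> lower_set P a"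
proof (rule ccontr)
  assume "\<not> ?thesis"
  then obtain s s' where s: "strict P s a" "\<not> strict P s b" and s': "strict P s' b" "\<not> strict P s' a"
    unfolding lower_set_def by auto
  have bottoms: "\<not> is_top P s" "\<not> is_top P s'"
    using s s' strict_imp_not_top[OF assms(1)] by blast+
  have "distinct [s, a, s', b]"
    using s s' bottoms assms(3,4) by auto
  moreover have "incomparable P s s'" "incomparable P s b" "incomparable P a s'" "incomparable P a b"
    unfolding incomparable_def
    using s s' bottoms assms(3,4) strict_imp_not_top[OF assms(1)] strict_imp_top
    unfolding strict_def by blast+
  ultimately show False
    using assms(2) s(1) s'(1) unfolding two_two_free_def by blast
qed

lemma word_order_asym: "word_order P a b \<Longrightarrow> \<not> word_order P b a"
  unfolding word_order_def by auto

lemma word_order_trans: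
  assumes "three_free P" "two_two_free P" and ab: "word_order P a b" and bc: "word_order P b c"
  shows "word_order P a c"
proof (cases "is_top P a"; cases "is_top P b"; cases "is_top P c")
  assume "is_top P a" "is_top P b" "is_top P c"
  then show ?thesis
    using ab bc psubset_lex_trans[of "lower_set P a" "lower_set P b" a b "lower_set P c" c]
    unfolding word_order_def by simp
next
  assume "is_top P a" "is_top P b" "\<not> is_top P c"
  then show ?thesis
    using ab bc unfolding word_order_def lower_set_def by auto
next
  assume tops: "is_top P a" "\<not> is_top P b" "is_top P c"
  then have "b \<in> lower_set P c - lower_set P a"
    using ab bc unfolding word_order_def lower_set_def by auto
  then show ?thesis
    using tops lower_sets_nested[OF assms(1,2), of a c] unfolding word_order_def by auto
next
  assume "is_top P a" "\<not> is_top P b" "\<not> is_top P c"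
  then show ?thesis
    using ab bc unfolding word_order_def upper_set_def by auto
next
  assume "\<not> is_top P a" "is_top P b" "is_top P c"
  then show ?thesis
    using ab bc unfolding word_order_def lower_set_def by auto
next
  assume tops: "\<not> is_top P a" "is_top P b" "\<not> is_top P c"
  then have "b \<in> upper_set P a - upper_set P c"
    using ab bc unfolding word_order_def upper_set_def by auto
  then show ?thesis
    using tops upper_sets_nested[OF assms(1,2), of a c] unfolding word_order_def by auto
next
  assume "\<not> is_top P a" "\<not> is_top P b" "is_top P c"
  then show ?thesis
    using ab bc unfolding word_order_def upper_set_def by auto
next
  assume "\<not> is_top P a" "\<not> is_top P b" "\<not> is_top P c"
  then show ?thesis
    using ab bc psubset_lex_trans[of "upper_set P c" "upper_set P b" c b "upper_set P a" a]
    unfolding word_order_def by auto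
qed

lemma word_order_total:
  assumes "three_free P" "two_two_free P" "a \<noteq> b"
  shows "word_order P a b \<or> word_order P b a"
proof (cases "is_top P a"; cases "is_top P b")
  assume "is_top P a" "is_top P b"
  then show ?thesis
    using psubset_lex_total[OF lower_sets_nested[OF assms(1,2)] assms(3)]
    unfolding word_order_def by simp
next
  assume "\<not> is_top P a" "\<not> is_top P b"
  then show ?thesis
    using psubset_lex_total[OF upper_sets_nested[OF assms(1,2)] assms(3)[symmetric]]
    unfolding word_order_def by auto
qed (auto simp: word_order_def)

lemma linorder_word_order:
  assumes "three_free P" "two_two_free P"
  shows "class.linorder (\<lambda>a b. word_order P a b \<or> a = b) (word_order P)"
  using word_order_asym word_order_trans[OF assms] word_order_total[OF assms]
  by (intro linorder_strictI order_strictI) blast+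

lemma strict_iff_word_order:
  assumes "three_free P"
  shows "strict P x y \<longleftrightarrow> \<not> is_top P x \<and> is_top P y \<and> word_order P x y"
  using strict_imp_not_top[OF assms] strict_imp_top unfolding word_order_def by auto

lemma is_top_word_poset_iff:
  assumes "distinct (map snd w)" "fst (w!0) = L0" "k < length w"
  shows "is_top (word_poset w) (snd (w!k)) \<longleftrightarrow> fst (w!k) = L1"
proof
  assume "is_top (word_poset w) (snd (w!k))"
  then obtain j where "j < length w" "w!j = (L1, snd (w!k))"
    unfolding is_top_def strict_word_poset_iff[OF assms(1)] by blast
  then show "fst (w!k) = L1"
    using label_eq_iff_index_eq[OF assms(1), of j k] assms(3) by (metis fst_conv snd_conv)
next
  assume "fst (w!k) = L1"
  moreover from this have "0 < k"
    using assms(2) by (cases k) auto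
  ultimately have "strict (word_poset w) (snd (w!0)) (snd (w!k))"
    using assms(2) strict_word_poset_nth_iff[OF assms(1) less_trans[OF \<open>0 < k\<close> assms(3)] assms(3)]
    by simp
  then show "is_top (word_poset w) (snd (w!k))"
    unfolding is_top_def by blast
qed

lemma upper_set_word_poset:
  assumes "distinct (map snd w)" "i < length w"
  shows "upper_set (word_poset w) (snd (w!i)) =
    {snd (w!l) | l. i < l \<and> l < length w \<and> fst (w!i) = L0 \<and> fst (w!l) = L1}"
proof (intro set_eqI iffI)
  fix y
  assume y: "y \<in> upper_set (word_poset w) (snd (w!i))"
  then obtain l where l: "l < length w" "w!l = (L1, y)"
    unfolding upper_set_def strict_word_poset_iff[OF assms(1)] by blast
  then have "strict (word_poset w) (snd (w!i)) (snd (w!l))"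
    using y unfolding upper_set_def by simp
  then show "y \<in> {snd (w!l) | l. i < l \<and> l < length w \<and> fst (w!i) = L0 \<and> fst (w!l) = L1}"
    using l strict_word_poset_nth_iff[OF assms l(1)] by force
next
  fix y
  assume "y \<in> {snd (w!l) | l. i < l \<and> l < length w \<and> fst (w!i) = L0 \<and> fst (w!l) = L1}"
  then obtain l where "y = snd (w!l)" "i < l" "l < length w" "fst (w!i) = L0" "fst (w!l) = L1"
    by blast
  then show "y \<in> upper_set (word_poset w) (snd (w!i))"
    unfolding upper_set_def using strict_word_poset_nth_iff[OF assms] by simp
qed

lemma lower_set_word_poset:
  assumes "distinct (map snd w)" "j < length w"
  shows "lower_set (word_poset w) (snd (w!j)) =
    {snd (w!k) | k. k < j \<and> fst (w!k) = L0 \<and> fst (w!j) = L1}"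
proof (intro set_eqI iffI)
  fix x
  assume x: "x \<in> lower_set (word_poset w) (snd (w!j))"
  then obtain k l where kl: "k < l" "l < length w" "w!k = (L0, x)"
    unfolding lower_set_def strict_word_poset_iff[OF assms(1)] by blast
  then have "k < length w" "strict (word_poset w) (snd (w!k)) (snd (w!j))"
    using x unfolding lower_set_def by simp_all
  then have "k < j \<and> fst (w!k) = L0 \<and> fst (w!j) = L1"
    using strict_word_poset_nth_iff[OF assms(1) _ assms(2)] by blast
  moreover have "x = snd (w!k)"
    using kl by simp
  ultimately show "x \<in> {snd (w!k) | k. k < j \<and> fst (w!k) = L0 \<and> fst (w!j) = L1}"
    by blast
next
  fix x
  assume "x \<in> {snd (w!k) | k. k < j \<and> fst (w!k) = L0 \<and> fst (w!j) = L1}"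
  then obtain k where "x = snd (w!k)" "k < j" "fst (w!k) = L0" "fst (w!j) = L1"
    by blast
  then show "x \<in> lower_set (word_poset w) (snd (w!j))"
    unfolding lower_set_def using strict_word_poset_nth_iff[OF assms(1) _ assms(2)] assms(2) by simp
qed

lemma word_order_zeros:
  assumes "good_word n w" "i < j" "j < length w" "fst (w!i) = L0" "fst (w!j) = L0"
  shows "word_order (word_poset w) (snd (w!i)) (snd (w!j))"
proof -
  let ?P = "word_poset w" and ?a = "snd (w!i)" and ?b = "snd (w!j)"
  have distinct: "distinct (map snd w)" and first: "fst (w!0) = L0"
    and decreasing: "\<And>k. k + 1 < length w \<Longrightarrow> fst (w!k) = L0 \<Longrightarrow> fst (w!(k+1)) = L0
      \<Longrightarrow> snd (w!(k+1)) < snd (w!k)"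
    using assms(1) unfolding good_word_def labelled_word_def by auto
  have bottoms: "\<not> is_top ?P ?a" "\<not> is_top ?P ?b"
    using is_top_word_poset_iff[OF distinct first] assms(2-5) by auto
  have upper: "upper_set ?P (snd (w!m)) =
      {snd (w!l) | l. m < l \<and> l < length w \<and> fst (w!l) = L1}" if "m \<le> j" "fst (w!m) = L0" for m
    using upper_set_word_poset[OF distinct] that assms(3) by simp
  have subset: "upper_set ?P ?b \<subseteq> upper_set ?P ?a"
    using upper[of i] upper[of j] assms(2,4,5) by auto
  have "upper_set ?P ?b \<subset> upper_set ?P ?a \<or> ?b < ?a"
  proof (cases "\<exists>k. i < k \<and> k < j \<and> fst (w!k) = L1")
    case True
    then obtain k where k: "i < k" "k < j" "fst (w!k) = L1"
      by blast
    have "snd (w!k) \<in> upper_set ?P ?a"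
      using upper[of i] k assms(2-4) by auto
    moreover have "snd (w!k) \<notin> upper_set ?P ?b"
      using upper[of j] k assms(3,5) label_eq_iff_index_eq[OF distinct] by auto
    ultimately show ?thesis
      using subset by blast
  next
    case False
    then have "fst (w!k) = L0" if "i \<le> k" "k \<le> j" for k
      using that assms(4,5) by (metis le_neq_implies_less letter.exhaust)
    then have "?a > ?b"
      using transp_consecutive[of "(>)" i j "\<lambda>k. snd (w!k)"] decreasing assms(2,3) by simp
    then show ?thesis ..
  qed
  then show ?thesis
    using subset bottoms unfolding word_order_def by (simp add: psubset_eq)
qed

lemma word_order_ones:
  assumes "good_word n w" "i < j" "j < length w" "fst (w!i) = L1" "fst (w!j) = L1"
  shows "word_order (word_poset w) (snd (w!i)) (snd (w!j))"
proof -
  let ?P = "word_poset w" and ?a = "snd (w!i)" and ?b = "snd (w!j)"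
  have distinct: "distinct (map snd w)" and first: "fst (w!0) = L0"
    and increasing: "\<And>k. k + 1 < length w \<Longrightarrow> fst (w!k) = L1 \<Longrightarrow> fst (w!(k+1)) = L1
      \<Longrightarrow> snd (w!k) < snd (w!(k+1))"
    using assms(1) unfolding good_word_def labelled_word_def by auto
  have tops: "is_top ?P ?a" "is_top ?P ?b"
    using is_top_word_poset_iff[OF distinct first] assms(2-5) by auto
  have lower: "lower_set ?P (snd (w!m)) = {snd (w!k) | k. k < m \<and> fst (w!k) = L0}"
    if "m \<le> j" "fst (w!m) = L1" for m
    using lower_set_word_poset[OF distinct] that assms(3) by simp
  have subset: "lower_set ?P ?a \<subseteq> lower_set ?P ?b"
    using lower[of i] lower[of j] assms(2,4,5) by auto
  have "lower_set ?P ?a \<subset> lower_set ?P ?b \<or> ?a < ?b"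
  proof (cases "\<exists>k. i < k \<and> k < j \<and> fst (w!k) = L0")
    case True
    then obtain k where k: "i < k" "k < j" "fst (w!k) = L0"
      by blast
    have "snd (w!k) \<in> lower_set ?P ?b"
      using lower[of j] k assms(3,5) by auto
    moreover have "snd (w!k) \<notin> lower_set ?P ?a"
      using lower[of i] k assms(2-4) label_eq_iff_index_eq[OF distinct] by auto
    ultimately show ?thesis
      using subset by blast
  next
    case False
    then have "fst (w!k) = L1" if "i \<le> k" "k \<le> j" for k
      using that assms(4,5) by (metis le_neq_implies_less letter.exhaust)
    then have "?a < ?b"
      using transp_consecutive[of "(<)" i j "\<lambda>k. snd (w!k)"] increasing assms(2,3) by simp
    then show ?thesis ..
  qed
  then show ?thesis
    using subset tops unfolding word_order_def by (simp add: psubset_eq)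
qed

lemma good_word_sorted:
  assumes "good_word n w"
  shows "sorted_wrt (word_order (word_poset w)) (map snd w)"
  unfolding sorted_wrt_iff_nth_less
proof (intro allI impI)
  fix i j
  assume "i < j" "j < length (map snd w)"
  then have ij: "i < j" "j < length w" "i < length w"
    by simp_all
  have distinct: "distinct (map snd w)" and first: "fst (w!0) = L0"
    using assms unfolding good_word_def labelled_word_def by auto
  have three_free: "three_free (word_poset w)"
    using word_poset_in_free_posets[OF assms] unfolding free_posets_def by blast
  note top_iff = is_top_word_poset_iff[OF distinct first]
  have "word_order (word_poset w) (snd (w!i)) (snd (w!j))"
  proof (cases "fst (w!i)"; cases "fst (w!j)")
    assume "fst (w!i) = L0" "fst (w!j) = L0"
    then show ?thesis
      using word_order_zeros[OF assms ij(1,2)] by simp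
  next
    assume "fst (w!i) = L0" "fst (w!j) = L1"
    then show ?thesis
      using strict_iff_word_order[OF three_free] strict_word_poset_nth_iff[OF distinct ij(3,2)] ij
      by simp
  next
    assume "fst (w!i) = L1" "fst (w!j) = L0"
    then show ?thesis
      using top_iff[OF ij(3)] top_iff[OF ij(2)] strict_word_poset_nth_iff[OF distinct ij(2,3)] ij
      unfolding word_order_def by simp
  next
    assume "fst (w!i) = L1" "fst (w!j) = L1"
    then show ?thesis
      using word_order_ones[OF assms ij(1,2)] by simp
  qed
  then show "word_order (word_poset w) (map snd w ! i) (map snd w ! j)"
    using ij by simp
qed

definition letter_of :: "(nat \<times> nat) set \<Rightarrow> nat \<Rightarrow> letter" where
  "letter_of P x = (if is_top P x then L1 else L0)"

definition poset_labels :: "nat \<Rightarrow> (nat \<times> nat) set \<Rightarrow> nat list" where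
  "poset_labels n P = (THE zs. sorted_wrt (word_order P) zs \<and> set zs = {1..n})"

definition poset_word :: "nat \<Rightarrow> (nat \<times> nat) set \<Rightarrow> (letter \<times> nat) list" where
  "poset_word n P = map (\<lambda>x. (letter_of P x, x)) (poset_labels n P)"

lemma ex1_sorted_labels:
  assumes "three_free P" "two_two_free P"
  shows "\<exists>!zs. sorted_wrt (word_order P) zs \<and> set zs = {1..n}"
  using linorder.ex1_sorted_list_for_set_if_finite[OF linorder_word_order[OF assms]] by simp

lemma map_snd_poset_word: "map snd (poset_word n P) = poset_labels n P"
  unfolding poset_word_def by (simp add: comp_def)

lemma poset_word_word_poset:
  assumes "good_word n w"
  shows "poset_word n (word_poset w) = w"
proof -
  let ?P = "word_poset w"
  have distinct: "distinct (map snd w)" and first: "fst (w!0) = L0"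
    and labels: "set (map snd w) = {1..n}"
    using assms unfolding good_word_def labelled_word_def by auto
  have "three_free ?P" "two_two_free ?P"
    using word_poset_in_free_posets[OF assms] unfolding free_posets_def by blast+
  then have "poset_labels n ?P = map snd w"
    unfolding poset_labels_def
    using good_word_sorted[OF assms] labels by (intro the1_equality ex1_sorted_labels) simp_all
  moreover have "letter_of ?P (snd (w!k)) = fst (w!k)" if "k < length w" for k
    using is_top_word_poset_iff[OF distinct first that] unfolding letter_of_def
    by (cases "fst (w!k)") auto
  ultimately show ?thesis
    unfolding poset_word_def by (intro nth_equalityI) (simp_all add: prod_eq_iff)
qed

context
  fixes n :: nat and P :: "(nat \<times> nat) set"
  assumes free: "P \<in> free_posets n"
begin

lemma free_poset_three_free: "three_free P"
  and free_poset_two_two_free: "two_two_free P"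
  using free unfolding free_posets_def by auto

lemma sorted_poset_labels: "sorted_wrt (word_order P) (poset_labels n P)"
  and set_poset_labels: "set (poset_labels n P) = {1..n}"
  unfolding poset_labels_def
  using theI'[OF ex1_sorted_labels[OF free_poset_three_free free_poset_two_two_free]] by simp_all

lemma distinct_poset_labels: "distinct (poset_labels n P)"
  using sorted_poset_labels
    linorder.strict_sorted_iff[OF linorder_word_order[OF free_poset_three_free free_poset_two_two_free]]
  by blast

lemma free_poset_mem_iff: "(x, y) \<in> P \<longleftrightarrow> (x = y \<and> x \<in> {1..n}) \<or> strict P x y"
  using free unfolding free_posets_def partial_order_on_n_def strict_def by blast

lemma free_poset_strict_in_range: "strict P x y \<Longrightarrow> x \<in> {1..n} \<and> y \<in> {1..n}"
  using free unfolding free_posets_def partial_order_on_n_def strict_def by blast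

lemma length_poset_labels: "length (poset_labels n P) = n"
  using set_poset_labels distinct_poset_labels by (metis card_atLeastAtMost diff_Suc_1 distinct_card)

lemma poset_word_nth:
  "k < n \<Longrightarrow> poset_word n P ! k = (letter_of P (poset_labels n P ! k), poset_labels n P ! k)"
  unfolding poset_word_def using length_poset_labels by simp

lemma length_poset_word: "length (poset_word n P) = n"
  unfolding poset_word_def using length_poset_labels by simp

lemma poset_labels_index: "x \<in> {1..n} \<Longrightarrow> \<exists>k<n. poset_labels n P ! k = x"
  using set_poset_labels length_poset_labels by (metis in_set_conv_nth)

lemma word_order_poset_labels_iff:
  "i < n \<Longrightarrow> j < n \<Longrightarrow> word_order P (poset_labels n P ! i) (poset_labels n P ! j) \<longleftrightarrow> i < j"
  using sorted_wrt_nth_iff_less[OF sorted_poset_labels word_order_asym] length_poset_labels by simp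

lemma strict_word_poset_poset_word: "strict (word_poset (poset_word n P)) x y \<longleftrightarrow> strict P x y"
proof -
  let ?zs = "poset_labels n P"
  have distinct: "distinct (map snd (poset_word n P))"
    using distinct_poset_labels by (simp add: map_snd_poset_word)
  have "strict (word_poset (poset_word n P)) x y \<longleftrightarrow>
      (\<exists>i j. i < j \<and> j < n \<and> (?zs!i = x \<and> \<not> is_top P x) \<and> (?zs!j = y \<and> is_top P y))"
    unfolding strict_word_poset_iff[OF distinct] length_poset_word
    by (intro ex_cong1 conj_cong refl) (auto simp: poset_word_nth letter_of_def)
  also have "\<dots> \<longleftrightarrow> \<not> is_top P x \<and> is_top P y \<and> word_order P x y"
  proof
    assume "\<exists>i j. i < j \<and> j < n \<and> (?zs!i = x \<and> \<not> is_top P x) \<and> (?zs!j = y \<and> is_top P y)"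
    then show "\<not> is_top P x \<and> is_top P y \<and> word_order P x y"
      using word_order_poset_labels_iff by auto
  next
    assume xy: "\<not> is_top P x \<and> is_top P y \<and> word_order P x y"
    then have "strict P x y"
      using strict_iff_word_order[OF free_poset_three_free] by blast
    then obtain i j where "i < n" "?zs!i = x" "j < n" "?zs!j = y"
      using free_poset_strict_in_range poset_labels_index by meson
    then show "\<exists>i j. i < j \<and> j < n \<and> (?zs!i = x \<and> \<not> is_top P x) \<and> (?zs!j = y \<and> is_top P y)"
      using xy word_order_poset_labels_iff by blast
  qed
  also have "\<dots> \<longleftrightarrow> strict P x y"
    using strict_iff_word_order[OF free_poset_three_free] by blast
  finally show ?thesis .
qed

lemma word_poset_poset_word: "word_poset (poset_word n P) = P"
proof -
  have "set (map snd (poset_word n P)) = {1..n}"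
    using set_poset_labels by (simp add: map_snd_poset_word)
  then show ?thesis
    using free_poset_mem_iff strict_word_poset_poset_word
    by (auto simp: mem_word_poset_iff)
qed

lemma poset_word_zeros_decreasing:
  assumes "Suc i < n" "fst (poset_word n P ! i) = L0" "fst (poset_word n P ! Suc i) = L0"
  shows "snd (poset_word n P ! Suc i) < snd (poset_word n P ! i)"
proof -
  let ?zs = "poset_labels n P"
  let ?a = "?zs!i" and ?b = "?zs!Suc i"
  have bottoms: "\<not> is_top P ?a" "\<not> is_top P ?b"
    using assms by (simp_all add: poset_word_nth letter_of_def split: if_splits)
  have "word_order P ?a ?b"
    using word_order_poset_labels_iff assms(1) by simp
  then have "upper_set P ?b \<subset> upper_set P ?a \<or> ?b < ?a"
    using bottoms unfolding word_order_def by auto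
  moreover have "\<not> upper_set P ?b \<subset> upper_set P ?a"
  proof
    text \<open>A top above \<open>?a\<close> but not above \<open>?b\<close> would have to sit strictly between them.\<close>
    assume "upper_set P ?b \<subset> upper_set P ?a"
    then obtain t where t: "strict P ?a t" "\<not> strict P ?b t"
      unfolding upper_set_def by blast
    then obtain k where k: "k < n" "?zs!k = t"
      using free_poset_strict_in_range poset_labels_index by meson
    have "word_order P ?a t" "word_order P t ?b"
      using t bottoms strict_iff_word_order[OF free_poset_three_free] unfolding word_order_def by auto
    then show False
      using word_order_poset_labels_iff k assms(1) by auto
  qed
  ultimately show ?thesis
    using assms(1) by (simp add: poset_word_nth)
qed

lemma poset_word_ones_increasing:
  assumes "Suc i < n" "fst (poset_word n P ! i) = L1" "fst (poset_word n P ! Suc i) = L1"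
  shows "snd (poset_word n P ! i) < snd (poset_word n P ! Suc i)"
proof -
  let ?zs = "poset_labels n P"
  let ?a = "?zs!i" and ?b = "?zs!Suc i"
  have tops: "is_top P ?a" "is_top P ?b"
    using assms by (simp_all add: poset_word_nth letter_of_def split: if_splits)
  have "word_order P ?a ?b"
    using word_order_poset_labels_iff assms(1) by simp
  then have "lower_set P ?a \<subset> lower_set P ?b \<or> ?a < ?b"
    using tops unfolding word_order_def by auto
  moreover have "\<not> lower_set P ?a \<subset> lower_set P ?b"
  proof
    assume "lower_set P ?a \<subset> lower_set P ?b"
    then obtain s where s: "strict P s ?b" "\<not> strict P s ?a"
      unfolding lower_set_def by blast
    then obtain k where k: "k < n" "?zs!k = s"
      using free_poset_strict_in_range poset_labels_index by meson
    have "word_order P ?a s" "word_order P s ?b"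
      using s tops strict_iff_word_order[OF free_poset_three_free] unfolding word_order_def by auto
    then show False
      using word_order_poset_labels_iff k assms(1) by auto
  qed
  ultimately show ?thesis
    using assms(1) by (simp add: poset_word_nth)
qed

lemma good_word_poset_word:
  assumes "n \<ge> 1"
  shows "good_word n (poset_word n P)"
proof -
  let ?zs = "poset_labels n P" and ?w = "poset_word n P"
  have "labelled_word n ?w"
    unfolding labelled_word_def map_snd_poset_word length_poset_word
    using set_poset_labels distinct_poset_labels by simp
  moreover have "fst (?w!0) = L0"
  proof (rule ccontr)
    text \<open>A top has a bottom below it, which comes earlier in the word.\<close>
    assume "fst (?w!0) \<noteq> L0"
    then have "is_top P (?zs!0)"
      using assms by (auto simp: poset_word_nth letter_of_def split: if_splits)
    then obtain s where s: "strict P s (?zs!0)"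
      unfolding is_top_def by blast
    then obtain k where "k < n" "?zs!k = s"
      using free_poset_strict_in_range poset_labels_index by meson
    then show False
      using s assms strict_iff_word_order[OF free_poset_three_free] word_order_poset_labels_iff
      by (metis less_one not_less_zero order.strict_trans2)
  qed
  moreover have "snd (?w!i) < snd (?w!j)"
    if "i < j" "j < length ?w" "fst (?w!i) = L0" "fst (?w!j) = L1" for i j
  proof -
    have "strict P (snd (?w!i)) (snd (?w!j))"
      using that strict_word_poset_poset_word
        strict_word_poset_nth_iff[of ?w i j] distinct_poset_labels
      by (simp add: map_snd_poset_word)
    then show ?thesis
      using free unfolding free_posets_def naturally_labelled_def by blast
  qed
  ultimately show ?thesis
    unfolding good_word_def length_poset_word
    using poset_word_zeros_decreasing poset_word_ones_increasing by auto
qed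

end

theorem proposition7:
  fixes n :: nat
  assumes "n \<ge> 1"
  shows "\<exists>f. bij_betw f (free_posets n) (good_words n)"
proof -
  have "bij_betw (poset_word n) (free_posets n) (good_words n)"
  proof (rule bij_betw_byWitness[where f' = word_poset])
    show "\<forall>P\<in>free_posets n. word_poset (poset_word n P) = P"
      using word_poset_poset_word by blast
    show "\<forall>w\<in>good_words n. poset_word n (word_poset w) = w"
      using poset_word_word_poset unfolding good_words_def by blast
    show "poset_word n ` free_posets n \<subseteq> good_words n"
      using good_word_poset_word[OF _ assms] unfolding good_words_def by blast
    show "word_poset ` good_words n \<subseteq> free_posets n"
      using word_poset_in_free_posets unfolding good_words_def by blast
  qed
  then show ?thesis
    by blast
qed

end
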